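(* Assume $f_6=1$ and $\theta_i\ne0$. For every point $\xi\in\mathbb P^3$, the plane with dual coordinates $W_i(\xi)=A_i\xi$ is the polar plane of $\xi$ with respect to the linear complex $\mathcal L_i$; that is, it passes through $\xi$, and a line through $\xi$ lies in this plane if and only if it belongs to $\mathcal L_i$.
   Context: Work over an algebraically closed field of characteristic $\neq2$. $F(X)=\sum_{j=0}^6f_jX^j=\prod_{j=1}^6(X-\theta_j)$ with distinct roots. $A_i$ is the antisymmetric matrix $$A_i=\begin{pmatrix}0&-f_1-\frac{2f_0}{\theta_i}&a_{13}&\theta_i^2\\ f_1+\frac{2f_0}{\theta_i}&0&\theta_i^2(f_5+2\theta_i)&-\theta_i\\ -a_{13}&-\theta_i^2(f_5+2\theta_i)&0&1\\ -\theta_i^2&\theta_i&-1&0\end{pmatrix},\quad a_{13}=\theta_i(f_3+2f_4\theta_i+2f_5\theta_i^2+2\theta_i^3),$$ and $W_i(\xi)=A_i\xi$ ($\xi$ a column vector) is read as dual coordinates of a plane $\sum_j w_j\xi_j=0$. Lines in $\mathbb P^3$ have Grassmann coordinates $(X_1:\dots:X_6)=(p_{43}:p_{24}:p_{41}:p_{21}:p_{31}:p_{32})$, $p_{jl}=u_jv_l-u_lv_j$ for the line through $u,v$. Define the linear forms $p_0=X_1+f_1X_4$, $p_1=X_2+2f_2X_4+f_3X_5$, $p_2=X_3+2f_4X_5+2f_3X_4+f_5X_6$, $p_3=2f_4X_4+2f_5X_5+2X_6$, $p_4=2f_5X_4+2X_5$, $p_5=2X_4$. The linear complex $\mathcal L_i$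 is the set of lines whose Grassmann coordinates satisfy $\sum_{j=0}^5p_j\theta_i^j=0$. The polar plane of a point $\xi$ with respect to a linear complex is the plane containing all lines of the complex through $\xi$. *)

theory Defs
  imports "HOL-Computational_Algebra.Polynomial"
begin

text \<open>Points of P^3 are represented by nonzero coordinate vectors
  \<xi> :: nat \<Rightarrow> 'a, using only the indices 1..4.\<close>

definition a13 :: "(nat \<Rightarrow> 'a::field) \<Rightarrow> 'a \<Rightarrow> 'a" where
  "a13 f t = t * (f 3 + 2 * f 4 * t + 2 * f 5 * t^2 + 2 * t^3)"

text \<open>Entries of the antisymmetric matrix A_i (with theta_i = t), indices 1..4.\<close>
definition Amat :: "(nat \<Rightarrow> 'a::field) \<Rightarrow> 'a \<Rightarrow> nat \<Rightarrow> nat \<Rightarrow> 'a" where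
  "Amat f t r c =
    (if (r, c) = (1, 2) then - f 1 - 2 * f 0 / t
     else if (r, c) = (1, 3) then a13 f t
     else if (r, c) = (1, 4) then t^2
     else if (r, c) = (2, 1) then f 1 + 2 * f 0 / t
     else if (r, c) = (2, 3) then t^2 * (f 5 + 2 * t)
     else if (r, c) = (2, 4) then - t
     else if (r, c) = (3, 1) then - a13 f t
     else if (r, c) = (3, 2) then - (t^2 * (f 5 + 2 * t))
     else if (r, c) = (3, 4) then 1
     else if (r, c) = (4, 1) then - (t^2)
     else if (r, c) = (4, 2) then t
     else if (r, c) = (4, 3) then -1
     else 0)"

definition Wvec :: "(nat \<Rightarrow> 'a::field) \<Rightarrow> 'a \<Rightarrow> (nat \<Rightarrow> 'a) \<Rightarrow> nat \<Rightarrow> 'a" where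
  "Wvec f t \<xi> r = (\<Sum>c = 1..4. Amat f t r c * \<xi> c)"

definition on_plane :: "(nat \<Rightarrow> 'a::field) \<Rightarrow> (nat \<Rightarrow> 'a) \<Rightarrow> bool" where
  "on_plane w x \<longleftrightarrow> (\<Sum>j = 1..4. w j * x j) = 0"

definition pl :: "(nat \<Rightarrow> 'a::field) \<Rightarrow> (nat \<Rightarrow> 'a) \<Rightarrow> nat \<Rightarrow> nat \<Rightarrow> 'a" where
  "pl u v j l = u j * v l - u l * v j"

definition Grass :: "(nat \<Rightarrow> 'a::field) \<Rightarrow> (nat \<Rightarrow> 'a) \<Rightarrow> nat \<Rightarrow> 'a" where
  "Grass u v k =
    (if k = 1 then pl u v 4 3 else if k = 2 then pl u v 2 4
     else if k = 3 then pl u v 4 1 else if k = 4 then pl u v 2 1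
     else if k = 5 then pl u v 3 1 else if k = 6 then pl u v 3 2 else 0)"

definition pform :: "(nat \<Rightarrow> 'a::field) \<Rightarrow> (nat \<Rightarrow> 'a) \<Rightarrow> nat \<Rightarrow> 'a" where
  "pform f X j =
    (if j = 0 then X 1 + f 1 * X 4
     else if j = 1 then X 2 + 2 * f 2 * X 4 + f 3 * X 5
     else if j = 2 then X 3 + 2 * f 4 * X 5 + 2 * f 3 * X 4 + f 5 * X 6
     else if j = 3 then 2 * f 4 * X 4 + 2 * f 5 * X 5 + 2 * X 6
     else if j = 4 then 2 * f 5 * X 4 + 2 * X 5
     else if j = 5 then 2 * X 4 else 0)"

definition in_complex :: "(nat \<Rightarrow> 'a::field) \<Rightarrow> 'a \<Rightarrow> (nat \<Rightarrow> 'a) \<Rightarrow> bool" where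
  "in_complex f t X \<longleftrightarrow> (\<Sum>j = 0..5. pform f X j * t^j) = 0"

definition alg_closed_field :: "'a::field itself \<Rightarrow> bool" where
  "alg_closed_field _ \<longleftrightarrow> (\<forall>p :: 'a poly. degree p \<ge> 1 \<longrightarrow> (\<exists>x. poly p x = 0))"

end

theory Submission
  imports Defs
begin

(*
  The matrix A_i is a 4x4 antisymmetric matrix.  Three facts about an arbitrary
  antisymmetric 4x4 matrix M with Pfaffian Pf(M) = m12 m34 - m13 m24 + m14 m23 do
  almost all of the work:
    (1) x^T M x = 0, so x lies on the plane with dual coordinates M x;
    (2) v^T M x is the linear combination of the Pluecker coordinates p_jl(x,v)
        with the entries of M as coefficients;
    (3) Pf(M) * x_j is a combination of the coordinates of M x, so M x = 0
        forces x = 0 when Pf(M) is nonzero.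
  For M = A_i, the relation F(theta_i) = 0 rewrites the combination in (2) as the
  linear form sum_j p_j theta_i^j defining the complex L_i, and rewrites Pf(A_i)
  as F'(theta_i), which is nonzero because theta_i is a simple root of F (the
  roots are distinct; over an infinite field, in particular an algebraically
  closed one, F equals the product of its linear factors as a polynomial).
  Finally, since x is on the plane, a line through x and v lies in the plane iff
  v does, i.e. iff v^T A_i x = 0, i.e. iff the line belongs to L_i.
*)

lemma sum_1_4: "(\<Sum>j = 1..4::nat. g j) = g 1 + g 2 + g 3 + (g 4 :: 'a::comm_monoid_add)"
proof -
  have "{1..4::nat} = {1,2,3,4}" by auto
  then show ?thesis by (simp add: add_ac)
qed

lemma sum_0_5: "(\<Sum>j = 0..5::nat. g j) = g 0 + g 1 + g 2 + g 3 + g 4 + (g 5 :: 'a::comm_monoid_add)"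
  by (simp add: eval_nat_numeral atLeast0_atMost_Suc add_ac)

lemma sum_0_6:
  "(\<Sum>j = 0..6::nat. g j) = g 0 + g 1 + g 2 + g 3 + g 4 + g 5 + (g 6 :: 'a::comm_monoid_add)"
  by (simp add: eval_nat_numeral atLeast0_atMost_Suc add_ac)

definition skew4 :: "'a \<Rightarrow> 'a \<Rightarrow> 'a \<Rightarrow> 'a \<Rightarrow> 'a \<Rightarrow> 'a \<Rightarrow> nat \<Rightarrow> nat \<Rightarrow> 'a::comm_ring_1" where
  "skew4 m12 m13 m14 m23 m24 m34 r c =
    (if (r, c) = (1, 2) then m12 else if (r, c) = (1, 3) then m13
     else if (r, c) = (1, 4) then m14 else if (r, c) = (2, 1) then - m12
     else if (r, c) = (2, 3) then m23 else if (r, c) = (2, 4) then m24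
     else if (r, c) = (3, 1) then - m13 else if (r, c) = (3, 2) then - m23
     else if (r, c) = (3, 4) then m34 else if (r, c) = (4, 1) then - m14
     else if (r, c) = (4, 2) then - m24 else if (r, c) = (4, 3) then - m34
     else 0)"

lemma skew4_rows:
  fixes x :: "nat \<Rightarrow> 'a::comm_ring_1"
  shows "(\<Sum>c = 1..4. skew4 m12 m13 m14 m23 m24 m34 1 c * x c)
           = m12 * x 2 + m13 * x 3 + m14 * x 4"
    and "(\<Sum>c = 1..4. skew4 m12 m13 m14 m23 m24 m34 2 c * x c)
           = - m12 * x 1 + m23 * x 3 + m24 * x 4"
    and "(\<Sum>c = 1..4. skew4 m12 m13 m14 m23 m24 m34 3 c * x c)
           = - m13 * x 1 - m23 * x 2 + m34 * x 4"
    and "(\<Sum>c = 1..4. skew4 m12 m13 m14 m23 m24 m34 4 c * x c)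
           = - m14 * x 1 - m24 * x 2 - m34 * x 3"
  unfolding sum_1_4 skew4_def by simp_all

lemma skew4_isotropic:
  fixes x :: "nat \<Rightarrow> 'a::comm_ring_1"
  shows "(\<Sum>r = 1..4. (\<Sum>c = 1..4. skew4 m12 m13 m14 m23 m24 m34 r c * x c) * x r) = 0"
  unfolding sum_1_4[of "\<lambda>r. (\<Sum>c = 1..4. _ r c * x c) * x r"] skew4_rows
  by (simp add: algebra_simps)

lemma skew4_bilinear:
  fixes x v :: "nat \<Rightarrow> 'a::field"
  shows "(\<Sum>r = 1..4. (\<Sum>c = 1..4. skew4 m12 m13 m14 m23 m24 m34 r c * x c) * v r)
       = m12 * pl x v 2 1 + m13 * pl x v 3 1 + m14 * pl x v 4 1
         + m23 * pl x v 3 2 + m24 * pl x v 4 2 + m34 * pl x v 4 3"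
  unfolding sum_1_4[of "\<lambda>r. (\<Sum>c = 1..4. _ r c * x c) * v r"] skew4_rows pl_def
  by (simp add: algebra_simps)

lemma skew4_kernel:
  fixes x :: "nat \<Rightarrow> 'a::idom"
  assumes pf: "m12 * m34 - m13 * m24 + m14 * m23 \<noteq> 0"
    and ker: "\<forall>r\<in>{1..4}. (\<Sum>c = 1..4. skew4 m12 m13 m14 m23 m24 m34 r c * x c) = 0"
  shows "\<forall>j\<in>{1..4}. x j = 0"
proof -
  let ?Pf = "m12 * m34 - m13 * m24 + m14 * m23"
  have r1: "m12 * x 2 + m13 * x 3 + m14 * x 4 = 0"
    and r2: "- m12 * x 1 + m23 * x 3 + m24 * x 4 = 0"
    and r3: "- m13 * x 1 - m23 * x 2 + m34 * x 4 = 0"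
    and r4: "- m14 * x 1 - m24 * x 2 - m34 * x 3 = 0"
    using ker[rule_format, of 1, unfolded skew4_rows] ker[rule_format, of 2, unfolded skew4_rows]
      ker[rule_format, of 3, unfolded skew4_rows] ker[rule_format, of 4, unfolded skew4_rows]
    by simp_all
  txt \<open>Multiplying M by the dual antisymmetric matrix gives Pf(M) times the identity:\<close>
  have "?Pf * x 1 = - (m34 * (- m12 * x 1 + m23 * x 3 + m24 * x 4)
      - m24 * (- m13 * x 1 - m23 * x 2 + m34 * x 4) + m23 * (- m14 * x 1 - m24 * x 2 - m34 * x 3))"
    and "?Pf * x 2 = m34 * (m12 * x 2 + m13 * x 3 + m14 * x 4)
      - m14 * (- m13 * x 1 - m23 * x 2 + m34 * x 4) + m13 * (- m14 * x 1 - m24 * x 2 - m34 * x 3)"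
    and "?Pf * x 3 = - (m24 * (m12 * x 2 + m13 * x 3 + m14 * x 4)
      - m14 * (- m12 * x 1 + m23 * x 3 + m24 * x 4) + m12 * (- m14 * x 1 - m24 * x 2 - m34 * x 3))"
    and "?Pf * x 4 = m23 * (m12 * x 2 + m13 * x 3 + m14 * x 4)
      - m13 * (- m12 * x 1 + m23 * x 3 + m24 * x 4) + m12 * (- m13 * x 1 - m23 * x 2 + m34 * x 4)"
    by (simp_all add: algebra_simps)
  then have "?Pf * x 1 = 0" "?Pf * x 2 = 0" "?Pf * x 3 = 0" "?Pf * x 4 = 0"
    using r1 r2 r3 r4 by simp_all
  moreover have "{1..4::nat} = {1,2,3,4}" by auto
  ultimately show ?thesis using pf by simp
qed

lemma line_on_plane_iff:
  assumes "on_plane w x"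
  shows "(\<forall>a b. on_plane w (\<lambda>j. a * x j + b * v j)) \<longleftrightarrow> on_plane w v"
proof -
  have span: "on_plane w (\<lambda>j. a * x j + b * v j) \<longleftrightarrow>
        a * (\<Sum>j = 1..4. w j * x j) + b * (\<Sum>j = 1..4. w j * v j) = 0" for a b
    unfolding on_plane_def sum_1_4 by (simp add: algebra_simps)
  have on_x: "(\<Sum>j = 1..4. w j * x j) = 0" using assms unfolding on_plane_def .
  have "(\<forall>a b. on_plane w (\<lambda>j. a * x j + b * v j)) \<longleftrightarrow> (\<forall>b. b * (\<Sum>j = 1..4. w j * v j) = 0)"
    unfolding span on_x by simp
  also have "\<dots> \<longleftrightarrow> on_plane w v"
    unfolding on_plane_def by (auto dest: spec[of _ 1])
  finally show ?thesis .
qed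

lemma Amat_skew4:
  "Amat f t = skew4 (- f 1 - 2 * f 0 / t) (a13 f t) (t^2) (t^2 * (f 5 + 2 * t)) (- t) 1"
  by (intro ext) (simp add: Amat_def skew4_def)

lemma on_plane_Wvec_self: "on_plane (Wvec f t x) x"
  unfolding on_plane_def Wvec_def Amat_skew4 by (rule skew4_isotropic)

lemma Amat_12_at_root:
  fixes f :: "nat \<Rightarrow> 'a::field"
  assumes "t \<noteq> 0" "(\<Sum>j = 0..6. f j * t^j) = 0" "f 6 = 1"
  shows "- f 1 - 2 * f 0 / t = f 1 + 2*f 2*t + 2*f 3*t^2 + 2*f 4*t^3 + 2*f 5*t^4 + 2*t^5"
proof -
  have f0: "f 0 = - (f 1 * t + f 2 * t^2 + f 3 * t^3 + f 4 * t^4 + f 5 * t^5 + t^6)"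
    using assms(2,3) by (simp add: sum_0_6 algebra_simps eq_neg_iff_add_eq_0)
  show ?thesis
    using assms(1) unfolding f0 by (simp add: field_simps eval_nat_numeral)
qed

lemma polar_form_eq_complex_form:
  fixes f :: "nat \<Rightarrow> 'a::field"
  assumes "t \<noteq> 0" "(\<Sum>j = 0..6. f j * t^j) = 0" "f 6 = 1"
  shows "(\<Sum>r = 1..4. Wvec f t x r * v r) = (\<Sum>j = 0..5. pform f (Grass x v) j * t^j)"
proof -
  let ?X = "Grass x v"
  have "(\<Sum>r = 1..4. Wvec f t x r * v r)
      = (- f 1 - 2 * f 0 / t) * ?X 4 + a13 f t * ?X 5 + t^2 * ?X 3
        + t^2 * (f 5 + 2 * t) * ?X 6 + t * ?X 2 + ?X 1"
    unfolding Wvec_def Amat_skew4 skew4_bilinear Grass_def by (simp add: pl_def algebra_simps)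
  also have "\<dots> = (f 1 + 2*f 2*t + 2*f 3*t^2 + 2*f 4*t^3 + 2*f 5*t^4 + 2*t^5) * ?X 4
        + (f 3 * t + 2*f 4*t^2 + 2*f 5*t^3 + 2*t^4) * ?X 5 + t^2 * ?X 3
        + (f 5 * t^2 + 2*t^3) * ?X 6 + t * ?X 2 + ?X 1"
    unfolding Amat_12_at_root[OF assms] a13_def by (simp add: algebra_simps eval_nat_numeral)
  also have "\<dots> = (\<Sum>j = 0..5. pform f ?X j * t^j)"
    unfolding sum_0_5 pform_def by (simp add: algebra_simps eval_nat_numeral)
  finally show ?thesis .
qed

lemma pfaffian_Amat:
  fixes f :: "nat \<Rightarrow> 'a::field"
  assumes "t \<noteq> 0" "(\<Sum>j = 0..6. f j * t^j) = 0" "f 6 = 1"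
  shows "(- f 1 - 2 * f 0 / t) * 1 - a13 f t * (- t) + t^2 * (t^2 * (f 5 + 2 * t))
       = f 1 + 2*f 2*t + 3*f 3*t^2 + 4*f 4*t^3 + 5*f 5*t^4 + 6*t^5"
  unfolding Amat_12_at_root[OF assms] a13_def by (simp add: algebra_simps eval_nat_numeral)

text \<open>An algebraically closed field is infinite: otherwise 1 + prod_a (X - a) has no root.\<close>
lemma alg_closed_infinite:
  assumes "alg_closed_field TYPE('a::field)"
  shows "infinite (UNIV :: 'a set)"
proof
  assume fin: "finite (UNIV :: 'a set)"
  define q :: "'a poly" where "q = (\<Prod>a\<in>UNIV. [:-a, 1:])"
  have "degree q = card (UNIV :: 'a set)"
    unfolding q_def by (subst degree_prod_eq_sum_degree) auto
  moreover have "card (UNIV :: 'a set) \<ge> 1" using fin by (simp add: Suc_le_eq card_gt_0_iff)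
  ultimately have "degree (q + 1) \<ge> 1"
    by (subst add.commute, subst degree_add_eq_right) auto
  then obtain x where "poly (q + 1) x = 0"
    using assms unfolding alg_closed_field_def by blast
  moreover have "poly q x = 0"
    unfolding q_def poly_prod using fin by (intro prod_zero) auto
  ultimately show False by simp
qed

lemma poly_eqI_infinite:
  fixes p q :: "'a::idom poly"
  assumes "infinite (UNIV :: 'a set)" "\<And>x. poly p x = poly q x"
  shows "p = q"
proof (rule ccontr)
  assume "p \<noteq> q"
  then have "finite {x. poly (p - q) x = 0}" by (intro poly_roots_finite) simp
  moreover have "{x. poly (p - q) x = 0} = UNIV" using assms(2) by auto
  ultimately show False using assms(1) by simp
qed

lemma pderiv_prod_linear_at_root:
  fixes \<theta> :: "'b \<Rightarrow> 'a::idom"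
  assumes "finite S" "inj_on \<theta> S" "i \<in> S"
  shows "poly (pderiv (\<Prod>j\<in>S. [:- \<theta> j, 1:])) (\<theta> i) \<noteq> 0"
proof -
  let ?t = "\<theta> i"
  have "poly (pderiv (\<Prod>j\<in>S. [:- \<theta> j, 1:])) ?t = (\<Sum>a\<in>S. \<Prod>b\<in>S - {a}. ?t - \<theta> b)"
    unfolding pderiv_prod poly_sum poly_mult poly_prod by (simp add: pderiv_pCons)
  also have "\<dots> = (\<Prod>b\<in>S - {i}. ?t - \<theta> b) + (\<Sum>a\<in>S - {i}. \<Prod>b\<in>S - {a}. ?t - \<theta> b)"
    using assms(1,3) by (simp add: sum.remove)
  also have "(\<Sum>a\<in>S - {i}. \<Prod>b\<in>S - {a}. ?t - \<theta> b) = 0"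
    using assms(1,3) by (intro sum.neutral ballI prod_zero) auto
  finally show ?thesis
    using assms unfolding inj_on_def by (auto simp: prod_zero_iff)
qed

lemma sextic_simple_root:
  fixes f \<theta> :: "nat \<Rightarrow> 'a::field"
  assumes "infinite (UNIV :: 'a set)"
    and F: "\<forall>x. (\<Sum>j = 0..6. f j * x^j) = (\<Prod>j = 1..6. (x - \<theta> j))"
    and "inj_on \<theta> {1..6}" "i \<in> {1..6}"
  shows "f 1 + 2*f 2*\<theta> i + 3*f 3*\<theta> i^2 + 4*f 4*\<theta> i^3 + 5*f 5*\<theta> i^4 + 6*f 6*\<theta> i^5 \<noteq> 0"
proof -
  define P :: "'a poly" where "P = (\<Sum>j = 0..6. monom (f j) j)"
  have "P = (\<Prod>j = 1..6. [:- \<theta> j, 1:])"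
    using F by (intro poly_eqI_infinite assms(1)) (simp add: P_def poly_sum poly_monom poly_prod)
  then have "poly (pderiv P) (\<theta> i) \<noteq> 0"
    using pderiv_prod_linear_at_root[OF _ assms(3,4)] by simp
  moreover have "poly (pderiv P) x = (\<Sum>j = 0..6::nat. of_nat j * f j * x^(j-1))" for x
    unfolding P_def using higher_pderiv_sum[of 1 "\<lambda>j. monom (f j) j" "{0..6::nat}"]
    by (simp add: poly_sum pderiv_monom poly_monom)
  ultimately show ?thesis by (simp add: sum_0_6 eval_nat_numeral)
qed

theorem mainTheorem7:
  fixes f :: "nat \<Rightarrow> 'a::field" and \<theta> :: "nat \<Rightarrow> 'a" and i :: nat
  assumes "alg_closed_field TYPE('a)"
    and "(2::'a) \<noteq> 0"
    and "\<forall>x. (\<Sum>j = 0..6. f j * x^j) = (\<Prod>j = 1..6. (x - \<theta> j))"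
    and "inj_on \<theta> {1..6}"
    and "f 6 = 1"
    and "i \<in> {1..6}"
    and "\<theta> i \<noteq> 0"
  shows "\<forall>\<xi>. (\<exists>j\<in>{1..4}. \<xi> j \<noteq> 0) \<longrightarrow>
           (\<exists>j\<in>{1..4}. Wvec f (\<theta> i) \<xi> j \<noteq> 0)
         \<and> on_plane (Wvec f (\<theta> i) \<xi>) \<xi>
         \<and> (\<forall>v. (\<forall>c. \<exists>j\<in>{1..4}. v j \<noteq> c * \<xi> j) \<longrightarrow>
               ((\<forall>a b. on_plane (Wvec f (\<theta> i) \<xi>) (\<lambda>j. a * \<xi> j + b * v j))
                \<longleftrightarrow> in_complex f (\<theta> i) (Grass \<xi> v)))"
proof (intro allI impI conjI)
  fix \<xi> v :: "nat \<Rightarrow> 'a"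
  assume nz: "\<exists>j\<in>{1..4}. \<xi> j \<noteq> 0"
  have root: "(\<Sum>j = 0..6. f j * \<theta> i^j) = 0"
  proof -
    have "(\<Prod>j = 1..6. (\<theta> i - \<theta> j)) = 0"
      using assms(6) by (intro prod_zero) auto
    then show ?thesis using assms(3) by simp
  qed
  note at_root = assms(7) root assms(5)
  have "f 1 + 2*f 2*\<theta> i + 3*f 3*\<theta> i^2 + 4*f 4*\<theta> i^3 + 5*f 5*\<theta> i^4 + 6*\<theta> i^5 \<noteq> 0"
    using sextic_simple_root[OF alg_closed_infinite[OF assms(1)] assms(3,4,6)] assms(5) by simp
  then have pf: "(- f 1 - 2 * f 0 / \<theta> i) * 1 - a13 f (\<theta> i) * (- \<theta> i)
      + \<theta> i^2 * (\<theta> i^2 * (f 5 + 2 * \<theta> i)) \<noteq> 0"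
    unfolding pfaffian_Amat[OF at_root] .
  show "\<exists>j\<in>{1..4}. Wvec f (\<theta> i) \<xi> j \<noteq> 0"
    using skew4_kernel[OF pf, of \<xi>] nz unfolding Wvec_def Amat_skew4 by blast
  show "on_plane (Wvec f (\<theta> i) \<xi>) \<xi>" by (rule on_plane_Wvec_self)
  show "(\<forall>a b. on_plane (Wvec f (\<theta> i) \<xi>) (\<lambda>j. a * \<xi> j + b * v j))
          \<longleftrightarrow> in_complex f (\<theta> i) (Grass \<xi> v)"
  proof -
    have "(\<forall>a b. on_plane (Wvec f (\<theta> i) \<xi>) (\<lambda>j. a * \<xi> j + b * v j))
        \<longleftrightarrow> on_plane (Wvec f (\<theta> i) \<xi>) v"
      by (rule line_on_plane_iff[OF on_plane_Wvec_self])
    also have "\<dots> \<longleftrightarrow> in_complex f (\<theta> i) (Grass \<xi> v)"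
      unfolding on_plane_def in_complex_def polar_form_eq_complex_form[OF at_root] ..
    finally show ?thesis .
  qed
qed

end
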